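(* Let $B:W_\mathbb{C}\times W_\mathbb{C}\to\mathbb{R}$ be an element of $\mathsf{BIL}$. Then the $2$-cocycle $\Gamma_\ell\times\Gamma_\ell\to\mathcal{O}_\epsilon$, $([h,t],[h',t'])\mapsto B(t,t')$ (constant functions), represents the zero class in $\mathrm{H}^2(\Gamma_\ell,\mathcal{O}_\epsilon)$. That is, the image of $\mathsf{BIL}$ in $\mathrm{H}^2(\Gamma_\ell,\mathcal{O}_\epsilon)$ vanishes.
   Context: Let $\mathbf{k}=\mathbb{Q}(\sqrt d)$ be imaginary quadratic of discriminant $d<0$ inside $\mathbb{C}$, $\delta=\sqrt d$ (principal branch). Let $V$ be a hermitian $\mathbf{k}$-space of signature $(1,n+1)$, $n\ge1$, with form $\langle\cdot,\cdot\rangle$ linear in the left argument, $V_\mathbb{C}=V\otimes\mathbb{C}$; $L$ an even integral full-rank $\mathcal{O}_\mathbf{k}$-lattice with dual $L'$ (w.r.t. the inverse different); $\Gamma$ a finite-index subgroup of the subgroup of $\mathrm{SU}(L)$ acting trivially on $L'/L$. Fix primitive isotropic $\ell\in L$, $\ell'\in L'$ with $\langle\ell,\ell'\rangle\ne0$; $D=L\cap\ell^\perp\cap\ell'^\perp$, $W=D\otimes\mathbf{k}$, $W_\mathbb{C}=W\otimes\mathbb{C}$. Siegel domain $\mathcal{H}=\{(\tau,\sigma)\in\mathbb{C}\times W_\mathbb{C}:2\operatorname{Im}(\tau)|\delta||\langle\ell,\ell'\rangle|^2>-\langle\sigma,\sigma\rangle\}$. The Heisenberg group consists of pairs $[h,t]$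 ($h\in\mathbb{Q}$, $t\in W$) with law $[h,t]\circ[h',t']=[h+h'+|\delta|^{-1}\operatorname{Im}\langle t',t\rangle,t+t']$, acting on $\mathcal{H}$ by $[h,0]:(\tau,\sigma)\mapsto(\tau+h,\sigma)$, $[0,t]:(\tau,\sigma)\mapsto(\tau+\frac{\langle\sigma,t\rangle}{\delta\langle\ell',\ell\rangle}+\frac{\langle t,t\rangle}{2\delta},\sigma+\langle\ell',\ell\rangle t)$. $\Gamma_\ell=\Gamma\cap$ Heisenberg group, assumed to equal $\{[h,t]:h\in N\mathbb{Z},t\in D_{\ell,\Gamma}\}$ for some $N\in\mathbb{Q}_{>0}$ and finite-index sublattice $D_{\ell,\Gamma}\subseteq D$. For $\epsilon>0$, $U_\epsilon(\ell)=\{[z]\in\mathbb{P}V_\mathbb{C}:\langle z,z\rangle>0,\ \langle z,z\rangle|\langle\ell',\ell\rangle|^2/|\langle z,\ell\rangle|^2>1/\epsilon\}$, identified with a $\Gamma_\ell$-stable subset of $\mathcal{H}$ via $z(\tau,\sigma)=\ell'-\delta\tau\langle\ell',\ell\rangle\ell+\sigma$. $\mathcal{O}_\epsilon$ is the ring of holomorphic functions on $U_\epsilon(\ell)$ with the $\Gamma_\ell$-action induced from the action on $U_\epsilon(\ell)$; group cohomology is computed with the standard inhomogeneous complex. $\mathsf{BIL}$ is the real vector space of real bilinear forms on $W_\mathbb{C}$ spanned by forms $\operatorname{Im}H$ with $H$ a hermitian form on $W_\mathbb{C}$ and forms $\operatorname{Im}G$ with $G$ a symmetric complex bilinear form on $W_\mathbb{C}$.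 *)

theory Defs
  imports "HOL-Analysis.Analysis" "HOL-Computational_Algebra.Squarefree"
begin

definition imag_quad_disc :: "int \<Rightarrow> bool" where
  "imag_quad_disc d \<longleftrightarrow> d < 0 \<and>
     ((d mod 4 = 1 \<and> squarefree d) \<or>
      (d mod 4 = 0 \<and> squarefree (d div 4) \<and> (d div 4) mod 4 \<in> {2, 3}))"

definition qdelta :: "int \<Rightarrow> complex" where
  "qdelta d = csqrt (of_int d)"

definition kfield :: "int \<Rightarrow> complex set" where
  "kfield d = {of_rat a + of_rat b * qdelta d | a b. True}"

definition Ok :: "int \<Rightarrow> complex set" where
  "Ok d = {of_int a + of_int b * ((of_int d + qdelta d) / 2) | a b. True}"

definition inv_diff :: "int \<Rightarrow> complex set" where
  "inv_diff d = {a / qdelta d | a. a \<in> Ok d}"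

text \<open>V_C = complex^'m; V = the k-rational points (for the standard basis);
  the hermitian form is given by a Gram matrix A, linear in the left argument.\<close>
definition hform :: "complex^'m^'m \<Rightarrow> complex^'m \<Rightarrow> complex^'m \<Rightarrow> complex" where
  "hform A x y = (\<Sum>i\<in>UNIV. \<Sum>j\<in>UNIV. x$i * A$i$j * cnj (y$j))"

definition kpoints :: "int \<Rightarrow> (complex^'m) set" where
  "kpoints d = {v. \<forall>i. v$i \<in> kfield d}"

definition hermitian_k_form :: "int \<Rightarrow> complex^'m^'m \<Rightarrow> bool" where
  "hermitian_k_form d A \<longleftrightarrow> (\<forall>i j. A$i$j \<in> kfield d \<and> A$j$i = cnj (A$i$j))"

definition herm_signature :: "complex^'m^'m \<Rightarrow> nat \<Rightarrow> nat \<Rightarrow> bool" where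
  "herm_signature A p q \<longleftrightarrow> CARD('m) = p + q \<and>
     (\<exists>b :: 'm \<Rightarrow> complex^'m.
        (\<forall>i j. i \<noteq> j \<longrightarrow> hform A (b i) (b j) = 0) \<and>
        (\<forall>i. hform A (b i) (b i) = 1 \<or> hform A (b i) (b i) = -1) \<and>
        card {i. hform A (b i) (b i) = 1} = p \<and>
        card {i. hform A (b i) (b i) = -1} = q)"

definition Ok_span :: "int \<Rightarrow> (complex^'m) set \<Rightarrow> (complex^'m) set" where
  "Ok_span d S = {v. \<exists>F c. finite F \<and> F \<subseteq> S \<and> (\<forall>x\<in>F. c x \<in> Ok d) \<and>
                        v = (\<Sum>x\<in>F. c x *s x)}"

definition full_Ok_lattice :: "int \<Rightarrow> (complex^'m) set \<Rightarrow> bool" where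
  "full_Ok_lattice d L \<longleftrightarrow> L \<subseteq> kpoints d \<and>
     (\<exists>S. finite S \<and> L = Ok_span d S) \<and>
     (\<forall>v\<in>kpoints d. \<exists>a::int. a \<noteq> 0 \<and> of_int a *s v \<in> L)"

definition dual_lattice :: "int \<Rightarrow> complex^'m^'m \<Rightarrow> (complex^'m) set \<Rightarrow> (complex^'m) set" where
  "dual_lattice d A L = {x \<in> kpoints d. \<forall>y\<in>L. hform A x y \<in> inv_diff d}"

definition even_integral :: "int \<Rightarrow> complex^'m^'m \<Rightarrow> (complex^'m) set \<Rightarrow> bool" where
  "even_integral d A L \<longleftrightarrow> L \<subseteq> dual_lattice d A L \<and>
     (\<forall>x\<in>L. hform A x x \<in> \<int>)"

definition primitive_in :: "int \<Rightarrow> (complex^'m) set \<Rightarrow> complex^'m \<Rightarrow> bool" where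
  "primitive_in d M v \<longleftrightarrow> v \<in> M \<and> v \<noteq> 0 \<and>
     (\<forall>a\<in>kfield d. a *s v \<in> M \<longrightarrow> a \<in> Ok d)"

definition WC :: "complex^'m^'m \<Rightarrow> complex^'m \<Rightarrow> complex^'m \<Rightarrow> (complex^'m) set" where
  "WC A l l' = {s. hform A s l = 0 \<and> hform A s l' = 0}"

text \<open>Elements [h,t] are pairs (h,t).\<close>
definition heis_mult :: "int \<Rightarrow> complex^'m^'m \<Rightarrow> real \<times> (complex^'m) \<Rightarrow> real \<times> (complex^'m) \<Rightarrow> real \<times> (complex^'m)" where
  "heis_mult d A g g' = (case g of (h, t) \<Rightarrow> case g' of (h', t') \<Rightarrow>
      (h + h' + Im (hform A t' t) / cmod (qdelta d), t + t'))"

definition heis_inv :: "real \<times> (complex^'m) \<Rightarrow> real \<times> (complex^'m)" where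
  "heis_inv g = (case g of (h, t) \<Rightarrow> (- h, - t))"

text \<open>Action of [h,t] = [h,0] o [0,t] on the Siegel domain; c = <l',l>.\<close>
definition heis_act :: "int \<Rightarrow> complex^'m^'m \<Rightarrow> complex \<Rightarrow> real \<times> (complex^'m)
      \<Rightarrow> complex \<times> (complex^'m) \<Rightarrow> complex \<times> (complex^'m)" where
  "heis_act d A c g z = (case g of (h, t) \<Rightarrow> case z of (\<tau>, \<sigma>) \<Rightarrow>
      (\<tau> + of_real h + hform A \<sigma> t / (qdelta d * c) + hform A t t / (2 * qdelta d),
       \<sigma> + c *s t))"

text \<open>U_eps(l) inside the Siegel domain, via z(tau,sigma) = l' - delta tau <l',l> l + sigma.\<close>
definition Ueps :: "int \<Rightarrow> complex^'m^'m \<Rightarrow> complex^'m \<Rightarrow> complex^'m \<Rightarrow> real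
      \<Rightarrow> (complex \<times> (complex^'m)) set" where
  "Ueps d A l l' \<epsilon> = {(\<tau>, \<sigma>). \<sigma> \<in> WC A l l' \<and>
     (let z = l' - (qdelta d * \<tau> * hform A l' l) *s l + \<sigma> in
        Re (hform A z z) > 0 \<and>
        Re (hform A z z) * (cmod (hform A l' l))\<^sup>2 / (cmod (hform A z l))\<^sup>2 > 1 / \<epsilon>)}"

definition cscale :: "complex \<Rightarrow> complex \<times> (complex^'m) \<Rightarrow> complex \<times> (complex^'m)" where
  "cscale a v = (a * fst v, a *s snd v)"

definition holo_on :: "(complex \<times> (complex^'m) \<Rightarrow> complex) \<Rightarrow> (complex \<times> (complex^'m)) set \<Rightarrow> bool" where
  "holo_on f U \<longleftrightarrow> (\<forall>x\<in>U. \<exists>f'. (f has_derivative f') (at x within U) \<and>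
       (\<forall>a v. f' (cscale a v) = a * f' v))"

definition hermitian_on :: "(complex^'m) set \<Rightarrow> (complex^'m \<Rightarrow> complex^'m \<Rightarrow> complex) \<Rightarrow> bool" where
  "hermitian_on S H \<longleftrightarrow>
     (\<forall>x\<in>S. \<forall>y\<in>S. \<forall>z\<in>S. \<forall>a. H (x + y) z = H x z + H y z \<and> H (a *s x) z = a * H x z \<and>
        H y x = cnj (H x y))"

definition sym_bilinear_on :: "(complex^'m) set \<Rightarrow> (complex^'m \<Rightarrow> complex^'m \<Rightarrow> complex) \<Rightarrow> bool" where
  "sym_bilinear_on S G \<longleftrightarrow>
     (\<forall>x\<in>S. \<forall>y\<in>S. \<forall>z\<in>S. \<forall>a. G (x + y) z = G x z + G y z \<and> G (a *s x) z = a * G x z \<and>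
        G y x = G x y)"

definition BIL :: "(complex^'m) set \<Rightarrow> (complex^'m \<Rightarrow> complex^'m \<Rightarrow> real) set" where
  "BIL S = {B. \<exists>(k::nat) (r :: nat \<Rightarrow> real) F.
      (\<forall>i<k. hermitian_on S (F i) \<or> sym_bilinear_on S (F i)) \<and>
      (\<forall>x\<in>S. \<forall>y\<in>S. B x y = (\<Sum>i<k. r i * Im (F i x y)))}"

end

theory Submission
  imports Defs
begin

text \<open>All cochains used here depend on \<open>z = (\<tau>, \<sigma>)\<close> only through \<sigma>, on which
  \<open>[h,t]\<^sup>-\<^sup>1\<close> acts by the translation \<open>\<sigma> \<mapsto> \<sigma> - \<langle>\<ell>',\<ell>\<rangle> t\<close>. For a symmetric bilinear G,
  \<open>Im G(t,t')\<close> is the coboundary of the constant cochain \<open>-Im G(t,t)/2\<close>. For a hermitian H,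
  the cochain \<open>[h,t] \<mapsto> -H(\<sigma>,t)/(i\<langle>\<ell>',\<ell>\<rangle>) + H(t,t)/(2i)\<close> is affine-linear, hence holomorphic,
  in \<sigma>, and its coboundary is \<open>H(t,t')/i - (H(t,t') + conj H(t,t'))/(2i) = Im H(t,t')\<close>. As H is only given on \<open>W\<^sub>\<complex>\<close>, \<sigma> is first
  projected onto \<open>W\<^sub>\<complex>\<close> along \<ell> and \<ell>', which keeps the cochain complex-linear in \<sigma>.\<close>

lemma hform_add_left: "hform A (x + y) z = hform A x z + hform A y z"
  by (simp add: hform_def distrib_right sum.distrib)

lemma hform_diff_left: "hform A (x - y) z = hform A x z - hform A y z"
  by (simp add: hform_def left_diff_distrib sum_subtractf)

lemma hform_scale_left: "hform A (a *s x) z = a * hform A x z"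
  by (simp add: hform_def sum_distrib_left mult.assoc)

lemma hform_cnj_swap:
  assumes "hermitian_k_form d A"
  shows "hform A y x = cnj (hform A x y)"
proof -
  have cnj_A: "cnj (A$i$j) = A$j$i" for i j
    using assms unfolding hermitian_k_form_def by (metis complex_cnj_cnj)
  have "cnj (hform A x y) = (\<Sum>i\<in>UNIV. \<Sum>j\<in>UNIV. cnj (x$i) * A$j$i * y$j)"
    by (simp add: hform_def cnj_A)
  also have "\<dots> = (\<Sum>j\<in>UNIV. \<Sum>i\<in>UNIV. cnj (x$i) * A$j$i * y$j)"
    by (rule sum.swap)
  also have "\<dots> = hform A y x"
    by (simp add: hform_def mult.commute mult.left_commute)
  finally show ?thesis by simp
qed

lemma subspace_WC: "vec.subspace (WC A l l')"
  unfolding vec.subspace_def WC_def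
  by (simp add: hform_add_left hform_scale_left) (simp add: hform_def)

definition WC_proj :: "complex^'m^'m \<Rightarrow> complex^'m \<Rightarrow> complex^'m \<Rightarrow> complex^'m \<Rightarrow> complex^'m" where
  "WC_proj A l l' v = v - (hform A v l' / hform A l l') *s l - (hform A v l / hform A l' l) *s l'"

lemma WC_proj_in_WC:
  assumes "hform A l l = 0" "hform A l' l' = 0" "hform A l l' \<noteq> 0" "hform A l' l \<noteq> 0"
  shows "WC_proj A l l' v \<in> WC A l l'"
  using assms by (simp add: WC_proj_def WC_def hform_diff_left hform_scale_left)

lemma WC_proj_id: "v \<in> WC A l l' \<Longrightarrow> WC_proj A l l' v = v"
  by (simp add: WC_proj_def WC_def)

lemma WC_proj_add: "WC_proj A l l' (x + y) = WC_proj A l l' x + WC_proj A l l' y"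
  by (simp add: WC_proj_def hform_add_left add_divide_distrib vector_add_ldistrib algebra_simps)

lemma WC_proj_scale: "WC_proj A l l' (a *s x) = a *s WC_proj A l l' x"
  by (simp add: WC_proj_def hform_scale_left vec_eq_iff algebra_simps)

lemma holo_on_const: "holo_on (\<lambda>z. k) U"
  unfolding holo_on_def by (auto intro!: exI[of _ "\<lambda>v. 0"])

lemma holo_on_add:
  assumes "holo_on f U" "holo_on g U"
  shows "holo_on (\<lambda>z. f z + g z) U"
  unfolding holo_on_def
proof
  fix x assume "x \<in> U"
  then obtain f' g' where "(f has_derivative f') (at x within U)" "\<forall>a v. f' (cscale a v) = a * f' v"
    and "(g has_derivative g') (at x within U)" "\<forall>a v. g' (cscale a v) = a * g' v"
    using assms unfolding holo_on_def by meson
  then show "\<exists>h'. ((\<lambda>z. f z + g z) has_derivative h') (at x within U) \<and>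
      (\<forall>a v. h' (cscale a v) = a * h' v)"
    by (intro exI[of _ "\<lambda>v. f' v + g' v"]) (simp add: has_derivative_add distrib_left)
qed

lemma holo_on_cmult:
  assumes "holo_on f U"
  shows "holo_on (\<lambda>z. c * f z) U"
  unfolding holo_on_def
proof
  fix x assume "x \<in> U"
  then obtain f' where "(f has_derivative f') (at x within U)" "\<forall>a v. f' (cscale a v) = a * f' v"
    using assms unfolding holo_on_def by meson
  then show "\<exists>h'. ((\<lambda>z. c * f z) has_derivative h') (at x within U) \<and>
      (\<forall>a v. h' (cscale a v) = a * h' v)"
    by (intro exI[of _ "\<lambda>v. c * f' v"]) (simp add: has_derivative_mult_right mult.left_commute)
qed

lemma holo_on_sum:
  "(\<And>i. i \<in> I \<Longrightarrow> holo_on (f i) U) \<Longrightarrow> holo_on (\<lambda>z. \<Sum>i\<in>I. f i z) U"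
  by (induction I rule: infinite_finite_induct) (auto intro: holo_on_const holo_on_add)

lemma holo_on_linear_snd:
  fixes L :: "complex^'m \<Rightarrow> complex"
  assumes add: "\<And>x y. L (x + y) = L x + L y" and scale: "\<And>a x. L (a *s x) = a * L x"
  shows "holo_on (\<lambda>z. L (snd z)) U"
proof -
  have "linear (\<lambda>z::complex \<times> (complex^'m). L (snd z))"
  proof
    fix r :: real and z :: "complex \<times> (complex^'m)"
    have "snd (r *\<^sub>R z) = complex_of_real r *s snd z"
      by (simp add: vec_eq_iff) (simp add: scaleR_conv_of_real)
    then show "L (snd (r *\<^sub>R z)) = r *\<^sub>R L (snd z)"
      by (simp add: scale scaleR_conv_of_real)
  qed (simp add: add)
  then have "((\<lambda>z. L (snd z)) has_derivative (\<lambda>z. L (snd z))) (at x within U)" for x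
    by (simp add: bounded_linear_imp_has_derivative linear_conv_bounded_linear)
  moreover have "L (snd (cscale a v)) = a * L (snd v)" for a v
    by (simp add: cscale_def scale)
  ultimately show ?thesis
    unfolding holo_on_def by blast
qed

lemma hermitian_on_add_left:
  "hermitian_on S H \<Longrightarrow> x \<in> S \<Longrightarrow> y \<in> S \<Longrightarrow> z \<in> S \<Longrightarrow> H (x + y) z = H x z + H y z"
  unfolding hermitian_on_def by blast

lemma hermitian_on_scale_left:
  "hermitian_on S H \<Longrightarrow> x \<in> S \<Longrightarrow> z \<in> S \<Longrightarrow> H (a *s x) z = a * H x z"
  unfolding hermitian_on_def by blast

lemma hermitian_on_cnj_swap:
  "hermitian_on S H \<Longrightarrow> x \<in> S \<Longrightarrow> y \<in> S \<Longrightarrow> H y x = cnj (H x y)"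
  unfolding hermitian_on_def by blast

lemma hermitian_on_add_right:
  assumes S: "vec.subspace S" and H: "hermitian_on S H" and x: "x \<in> S" and y: "y \<in> S" and z: "z \<in> S"
  shows "H z (x + y) = H z x + H z y"
proof -
  have xy: "x + y \<in> S" using S x y by (rule vec.subspace_add)
  have "H z (x + y) = cnj (H (x + y) z)"
    by (rule hermitian_on_cnj_swap[OF H xy z])
  also have "\<dots> = cnj (H x z) + cnj (H y z)"
    by (simp add: hermitian_on_add_left[OF H x y z])
  also have "\<dots> = H z x + H z y"
    by (simp add: hermitian_on_cnj_swap[OF H x z] hermitian_on_cnj_swap[OF H y z])
  finally show ?thesis .
qed

lemma sym_bilinear_on_add_left:
  "sym_bilinear_on S G \<Longrightarrow> x \<in> S \<Longrightarrow> y \<in> S \<Longrightarrow> z \<in> S \<Longrightarrow> G (x + y) z = G x z + G y z"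
  unfolding sym_bilinear_on_def by blast

lemma sym_bilinear_on_commute:
  "sym_bilinear_on S G \<Longrightarrow> x \<in> S \<Longrightarrow> y \<in> S \<Longrightarrow> G y x = G x y"
  unfolding sym_bilinear_on_def by blast

lemma sym_bilinear_on_diag_add:
  assumes S: "vec.subspace S" and G: "sym_bilinear_on S G" and x: "x \<in> S" and y: "y \<in> S"
  shows "G (x + y) (x + y) = G x x + 2 * G x y + G y y"
proof -
  have xy: "x + y \<in> S" using S x y by (rule vec.subspace_add)
  have "G (x + y) (x + y) = G (x + y) x + G (x + y) y"
    using sym_bilinear_on_add_left[OF G x y xy] sym_bilinear_on_commute[OF G x xy]
      sym_bilinear_on_commute[OF G y xy] by simp
  also have "\<dots> = G x x + 2 * G x y + G y y"
    using sym_bilinear_on_add_left[OF G x y x] sym_bilinear_on_add_left[OF G x y y]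
      sym_bilinear_on_commute[OF G x y] by simp
  finally show ?thesis .
qed

definition herm_cochain :: "complex \<Rightarrow> (complex^'m \<Rightarrow> complex^'m \<Rightarrow> complex) \<Rightarrow>
    complex^'m \<Rightarrow> complex^'m \<Rightarrow> complex" where
  "herm_cochain c H t \<sigma> = - H \<sigma> t / (\<i> * c) + H t t / (2 * \<i>)"

definition sym_cochain :: "(complex^'m \<Rightarrow> complex^'m \<Rightarrow> complex) \<Rightarrow> complex^'m \<Rightarrow> complex" where
  "sym_cochain G t = complex_of_real (- Im (G t t) / 2)"

lemma herm_cochain_coboundary:
  assumes S: "vec.subspace S" and H: "hermitian_on S H"
    and t: "t \<in> S" and t': "t' \<in> S" and \<sigma>: "\<sigma> \<in> S" and c: "c \<noteq> 0"
  shows "herm_cochain c H t' (\<sigma> + c *s (- t)) - herm_cochain c H (t + t') \<sigma> + herm_cochain c H t \<sigma>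
    = complex_of_real (Im (H t t'))"
proof -
  have ct: "(- c) *s t \<in> S" using S t by (rule vec.subspace_scale)
  have tt': "t + t' \<in> S" using S t t' by (rule vec.subspace_add)
  have shifted: "H (\<sigma> + c *s (- t)) t' = H \<sigma> t' - c * H t t'"
    using hermitian_on_add_left[OF H \<sigma> ct t'] hermitian_on_scale_left[OF H t t', of "- c"]
    by (simp add: vector_smult_lneg vector_smult_rneg)
  have right: "H \<sigma> (t + t') = H \<sigma> t + H \<sigma> t'"
    by (rule hermitian_on_add_right[OF S H t t' \<sigma>])
  have "H (t + t') (t + t') = H t (t + t') + H t' (t + t')"
    by (rule hermitian_on_add_left[OF H t t' tt'])
  also have "\<dots> = H t t + H t t' + cnj (H t t') + H t' t'"
    by (simp add: hermitian_on_add_right[OF S H t t'] t t' hermitian_on_cnj_swap[OF H t t'])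
  finally have diag: "H (t + t') (t + t') = H t t + H t t' + cnj (H t t') + H t' t'" .
  have im: "complex_of_real (Im z) = (z - cnj z) / (2 * \<i>)" for z
    by (simp add: complex_eq_iff)
  show ?thesis
    unfolding herm_cochain_def shifted right diag im using c
    by (simp add: field_simps)
qed

lemma sym_cochain_coboundary:
  assumes "vec.subspace S" "sym_bilinear_on S G" "t \<in> S" "t' \<in> S"
  shows "sym_cochain G t' - sym_cochain G (t + t') + sym_cochain G t = complex_of_real (Im (G t t'))"
  using sym_bilinear_on_diag_add[OF assms] by (simp add: sym_cochain_def field_simps)

lemma snd_heis_act: "snd (heis_act d A c g z) = snd z + c *s snd g"
  by (simp add: heis_act_def split: prod.split)

lemma snd_heis_inv: "snd (heis_inv g) = - snd g"
  by (simp add: heis_inv_def split: prod.split)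

lemma snd_heis_mult: "snd (heis_mult d A g g') = snd g + snd g'"
  by (simp add: heis_mult_def split: prod.split)

definition heis_coboundary :: "int \<Rightarrow> complex^'m^'m \<Rightarrow> complex \<Rightarrow>
    (real \<times> (complex^'m) \<Rightarrow> complex \<times> (complex^'m) \<Rightarrow> complex) \<Rightarrow>
    real \<times> (complex^'m) \<Rightarrow> real \<times> (complex^'m) \<Rightarrow> complex \<times> (complex^'m) \<Rightarrow> complex" where
  "heis_coboundary d A c \<phi> g g' z =
     \<phi> g' (heis_act d A c (heis_inv g) z) - \<phi> (heis_mult d A g g') z + \<phi> g z"

lemma heis_coboundary_lincomb:
  "heis_coboundary d A c (\<lambda>g z. \<Sum>i\<in>I. r i * \<phi> i g z) g g' z =
     (\<Sum>i\<in>I. r i * heis_coboundary d A c (\<phi> i) g g' z)"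
  by (simp add: heis_coboundary_def sum.distrib sum_subtractf algebra_simps)

definition form_cochain :: "complex^'m^'m \<Rightarrow> complex^'m \<Rightarrow> complex^'m \<Rightarrow>
    (complex^'m \<Rightarrow> complex^'m \<Rightarrow> complex) \<Rightarrow> real \<times> (complex^'m) \<Rightarrow> complex \<times> (complex^'m) \<Rightarrow> complex" where
  "form_cochain A l l' F g z =
     (if hermitian_on (WC A l l') F
      then herm_cochain (hform A l' l) F (snd g) (WC_proj A l l' (snd z))
      else sym_cochain F (snd g))"

lemma holo_on_form_cochain:
  assumes "hform A l l = 0" "hform A l' l' = 0" "hform A l l' \<noteq> 0" "hform A l' l \<noteq> 0"
    and t: "snd g \<in> WC A l l'"
  shows "holo_on (form_cochain A l l' F g) U"
proof (cases "hermitian_on (WC A l l') F")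
  case True
  define L where "L x = - F (WC_proj A l l' x) (snd g) / (\<i> * hform A l' l)" for x
  have P: "WC_proj A l l' x \<in> WC A l l'" for x
    using assms(1-4) by (rule WC_proj_in_WC)
  have "holo_on (\<lambda>z. L (snd z)) U"
  proof (rule holo_on_linear_snd)
    show "L (x + y) = L x + L y" for x y
      unfolding L_def WC_proj_add hermitian_on_add_left[OF True P P t] by (simp add: diff_divide_distrib)
    show "L (a *s x) = a * L x" for a x
      unfolding L_def WC_proj_scale hermitian_on_scale_left[OF True P t] by simp
  qed
  then have "holo_on (\<lambda>z. L (snd z) + F (snd g) (snd g) / (2 * \<i>)) U"
    by (rule holo_on_add[OF _ holo_on_const])
  moreover have "form_cochain A l l' F g = (\<lambda>z. L (snd z) + F (snd g) (snd g) / (2 * \<i>))"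
    using True by (simp add: fun_eq_iff form_cochain_def herm_cochain_def L_def)
  ultimately show ?thesis
    by simp
next
  case False
  then have "form_cochain A l l' F g = (\<lambda>z. sym_cochain F (snd g))"
    by (simp add: fun_eq_iff form_cochain_def)
  then show ?thesis
    by (simp add: holo_on_const)
qed

lemma heis_coboundary_form_cochain:
  assumes c: "hform A l' l \<noteq> 0" and F: "hermitian_on (WC A l l') F \<or> sym_bilinear_on (WC A l l') F"
    and t: "snd g \<in> WC A l l'" and t': "snd g' \<in> WC A l l'" and \<sigma>: "snd z \<in> WC A l l'"
  shows "heis_coboundary d A (hform A l' l) (form_cochain A l l' F) g g' z =
    complex_of_real (Im (F (snd g) (snd g')))"
proof (cases "hermitian_on (WC A l l') F")
  case True
  have "snd z + hform A l' l *s (- snd g) \<in> WC A l l'"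
    by (intro vec.subspace_add[OF subspace_WC] vec.subspace_scale[OF subspace_WC]
        vec.subspace_neg[OF subspace_WC] \<sigma> t)
  moreover have "snd g + snd g' \<in> WC A l l'"
    using subspace_WC t t' by (rule vec.subspace_add)
  ultimately show ?thesis
    using herm_cochain_coboundary[OF subspace_WC True t t' \<sigma> c] True \<sigma>
    by (simp add: heis_coboundary_def form_cochain_def snd_heis_act snd_heis_inv snd_heis_mult WC_proj_id)
next
  case False
  then show ?thesis
    using sym_cochain_coboundary[OF subspace_WC _ t t'] F
    by (simp add: heis_coboundary_def form_cochain_def snd_heis_mult)
qed

theorem proposition1:
  fixes d :: int and n :: nat
    and A :: "complex^'m^'m"
    and L :: "(complex^'m) set"
    and l l' :: "complex^'m"
    and N :: real and D\<Gamma> :: "(complex^'m) set"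
    and \<epsilon> :: real
    and B :: "complex^'m \<Rightarrow> complex^'m \<Rightarrow> real"
  assumes disc: "imag_quad_disc d"
    and n: "n \<ge> 1"
    and herm: "hermitian_k_form d A"
    and sig: "herm_signature A 1 (n + 1)"
    and latt: "full_Ok_lattice d L"
    and even: "even_integral d A L"
    and l_prim: "primitive_in d L l" and l_iso: "hform A l l = 0"
    and l'_prim: "primitive_in d (dual_lattice d A L) l'" and l'_iso: "hform A l' l' = 0"
    and ll': "hform A l l' \<noteq> 0"
    and N: "N \<in> \<rat>" "N > 0"
    and DG_sub: "D\<Gamma> \<subseteq> L \<inter> WC A l l'"
    and DG_grp: "0 \<in> D\<Gamma>" "\<And>x y. x \<in> D\<Gamma> \<Longrightarrow> y \<in> D\<Gamma> \<Longrightarrow> x - y \<in> D\<Gamma>"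
    and DG_fin: "finite ((\<lambda>x. (+) x ` D\<Gamma>) ` (L \<inter> WC A l l'))"
    and G_grp: "\<And>g g'. g \<in> {(h, t). h \<in> {N * of_int k | k. True} \<and> t \<in> D\<Gamma>} \<Longrightarrow>
                 g' \<in> {(h, t). h \<in> {N * of_int k | k. True} \<and> t \<in> D\<Gamma>} \<Longrightarrow>
                 heis_mult d A g g' \<in> {(h, t). h \<in> {N * of_int k | k. True} \<and> t \<in> D\<Gamma>}"
    and eps: "\<epsilon> > 0"
    and B: "B \<in> BIL (WC A l l')"
    and m: "CARD('m) = n + 2"
  shows "\<exists>\<phi> :: real \<times> (complex^'m) \<Rightarrow> complex \<times> (complex^'m) \<Rightarrow> complex.
     (\<forall>g \<in> {(h, t). h \<in> {N * of_int k | k. True} \<and> t \<in> D\<Gamma>}.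
        holo_on (\<phi> g) (Ueps d A l l' \<epsilon>)) \<and>
     (\<forall>g \<in> {(h, t). h \<in> {N * of_int k | k. True} \<and> t \<in> D\<Gamma>}.
      \<forall>g' \<in> {(h, t). h \<in> {N * of_int k | k. True} \<and> t \<in> D\<Gamma>}.
      \<forall>z \<in> Ueps d A l l' \<epsilon>.
        complex_of_real (B (snd g) (snd g')) =
          \<phi> g' (heis_act d A (hform A l' l) (heis_inv g) z)
          - \<phi> (heis_mult d A g g') z + \<phi> g z)"
proof -
  let ?\<Gamma> = "{(h, t). h \<in> {N * of_int k | k. True} \<and> t \<in> D\<Gamma>}"
  have c: "hform A l' l \<noteq> 0"
    using ll' hform_cnj_swap[OF herm, of l' l] by simp
  have in_WC: "snd g \<in> WC A l l'" if "g \<in> ?\<Gamma>" for g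
    using that DG_sub by auto
  obtain k :: nat and r F where F: "\<forall>i<k. hermitian_on (WC A l l') (F i) \<or> sym_bilinear_on (WC A l l') (F i)"
    and B_eq: "\<forall>x\<in>WC A l l'. \<forall>y\<in>WC A l l'. B x y = (\<Sum>i<k. r i * Im (F i x y))"
    using B unfolding BIL_def mem_Collect_eq by blast
  define \<phi> where "\<phi> g z = (\<Sum>i<k. complex_of_real (r i) * form_cochain A l l' (F i) g z)" for g z
  show ?thesis
  proof (intro exI[of _ \<phi>] conjI ballI)
    fix g assume "g \<in> ?\<Gamma>"
    then show "holo_on (\<phi> g) (Ueps d A l l' \<epsilon>)"
      unfolding \<phi>_def
      by (intro holo_on_sum holo_on_cmult holo_on_form_cochain l_iso l'_iso ll' c in_WC)
  next
    fix g g' z assume g: "g \<in> ?\<Gamma>" and g': "g' \<in> ?\<Gamma>" and z: "z \<in> Ueps d A l l' \<epsilon>"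
    have \<sigma>: "snd z \<in> WC A l l'"
      using z by (auto simp: Ueps_def)
    have "complex_of_real (B (snd g) (snd g')) =
        (\<Sum>i<k. complex_of_real (r i) * complex_of_real (Im (F i (snd g) (snd g'))))"
      using B_eq in_WC[OF g] in_WC[OF g'] by simp
    also have "\<dots> = (\<Sum>i<k. complex_of_real (r i) *
        heis_coboundary d A (hform A l' l) (form_cochain A l l' (F i)) g g' z)"
      using F by (intro sum.cong refl arg_cong2[where f = "(*)"] heis_coboundary_form_cochain[symmetric]
          c in_WC g g' \<sigma>) simp
    also have "\<dots> = heis_coboundary d A (hform A l' l) \<phi> g g' z"
      unfolding \<phi>_def heis_coboundary_lincomb ..
    finally show "complex_of_real (B (snd g) (snd g')) =
        \<phi> g' (heis_act d A (hform A l' l) (heis_inv g) z) - \<phi> (heis_mult d A g g') z + \<phi> g z"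
      by (simp only: heis_coboundary_def)
  qed
qed

end
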